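(* Let $L_{\mathbb{Z}_p}$ be a lattice with integral quadratic form $Q_L$ and consider $\Lambda_0=L_{\mathbb{Z}_p}\perp H^2=L_{\mathbb{Z}_p}\oplus\mathbb{Z}_p^4$ with $Q(x_L,x_0,x_1,x_2,x_3)=Q_L(x_L)+x_0x_1+x_2x_3$. Let $w\in\Lambda_0$ with $Q(w)\neq0$. Then the orthogonal complement $\langle w\rangle^\perp=\{x\in\Lambda_0:\langle w,x\rangle=0\}$ (with the restricted form) is isometric to $H\perp\Lambda$ for some lattice $\Lambda$.
   Context: $\langle v,w\rangle=Q(v+w)-Q(v)-Q(w)$ is the bilinear form of $Q$; $Q_L$ integral means $Q_L(L_{\mathbb{Z}_p})\subseteq\mathbb{Z}_p$. $H$ denotes the hyperbolic plane $\mathbb{Z}_p^2$ with $Q(x,y)=xy$ and $H^2=H\perp H$. *)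

theory Defs
  imports "HOL-Computational_Algebra.Primes"
begin

text \<open>p-adic integers, concretely: compatible sequences of residues x n in {0..<p^n}.\<close>
type_synonym padic = "nat \<Rightarrow> int"

definition Zp :: "int \<Rightarrow> padic set" where
  "Zp p = {x. \<forall>n. x n \<in> {0..<p ^ n} \<and> x (Suc n) mod p ^ n = x n}"

definition zp_zero :: padic where "zp_zero = (\<lambda>n. 0)"
definition zp_one :: "int \<Rightarrow> padic" where "zp_one p = (\<lambda>n. 1 mod p ^ n)"
definition zp_add :: "int \<Rightarrow> padic \<Rightarrow> padic \<Rightarrow> padic" where
  "zp_add p x y = (\<lambda>n. (x n + y n) mod p ^ n)"
definition zp_mul :: "int \<Rightarrow> padic \<Rightarrow> padic \<Rightarrow> padic" where
  "zp_mul p x y = (\<lambda>n. (x n * y n) mod p ^ n)"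
definition zp_neg :: "int \<Rightarrow> padic \<Rightarrow> padic" where
  "zp_neg p x = (\<lambda>n. (- x n) mod p ^ n)"
definition zp_sub :: "int \<Rightarrow> padic \<Rightarrow> padic \<Rightarrow> padic" where
  "zp_sub p x y = zp_add p x (zp_neg p y)"

definition Zp_vec :: "int \<Rightarrow> nat \<Rightarrow> (nat \<Rightarrow> padic) set" where
  "Zp_vec p m = {v. (\<forall>i<m. v i \<in> Zp p) \<and> (\<forall>i\<ge>m. v i = zp_zero)}"

definition vadd :: "int \<Rightarrow> (nat \<Rightarrow> padic) \<Rightarrow> (nat \<Rightarrow> padic) \<Rightarrow> (nat \<Rightarrow> padic)" where
  "vadd p x y = (\<lambda>i. zp_add p (x i) (y i))"
definition smult :: "int \<Rightarrow> padic \<Rightarrow> (nat \<Rightarrow> padic) \<Rightarrow> (nat \<Rightarrow> padic)" where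
  "smult p a x = (\<lambda>i. zp_mul p a (x i))"

definition bil :: "int \<Rightarrow> ((nat \<Rightarrow> padic) \<Rightarrow> padic) \<Rightarrow> (nat \<Rightarrow> padic) \<Rightarrow> (nat \<Rightarrow> padic) \<Rightarrow> padic" where
  "bil p Q x y = zp_sub p (zp_sub p (Q (vadd p x y)) (Q x)) (Q y)"

definition is_quadform :: "int \<Rightarrow> nat \<Rightarrow> ((nat \<Rightarrow> padic) \<Rightarrow> padic) \<Rightarrow> bool" where
  "is_quadform p m Q \<longleftrightarrow>
     (\<forall>x\<in>Zp_vec p m. Q x \<in> Zp p) \<and>
     (\<forall>a\<in>Zp p. \<forall>x\<in>Zp_vec p m. Q (smult p a x) = zp_mul p (zp_mul p a a) (Q x)) \<and>
     (\<forall>x\<in>Zp_vec p m. \<forall>y\<in>Zp_vec p m. \<forall>z\<in>Zp_vec p m.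
        bil p Q (vadd p x y) z = zp_add p (bil p Q x z) (bil p Q y z)) \<and>
     (\<forall>a\<in>Zp p. \<forall>x\<in>Zp_vec p m. \<forall>y\<in>Zp_vec p m.
        bil p Q (smult p a x) y = zp_mul p a (bil p Q x y))"

text \<open>Lambda_0 = L perp H^2 = Z_p^(n+4): coordinates 0..n-1 form x_L, then x_0,x_1,x_2,x_3.\<close>
definition vtrunc :: "nat \<Rightarrow> (nat \<Rightarrow> padic) \<Rightarrow> (nat \<Rightarrow> padic)" where
  "vtrunc n x = (\<lambda>i. if i < n then x i else zp_zero)"

definition Q0 :: "int \<Rightarrow> nat \<Rightarrow> ((nat \<Rightarrow> padic) \<Rightarrow> padic) \<Rightarrow> (nat \<Rightarrow> padic) \<Rightarrow> padic" where
  "Q0 p n QL x = zp_add p (zp_add p (QL (vtrunc n x)) (zp_mul p (x n) (x (n+1))))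
                          (zp_mul p (x (n+2)) (x (n+3)))"

definition orth_compl :: "int \<Rightarrow> nat \<Rightarrow> ((nat \<Rightarrow> padic) \<Rightarrow> padic) \<Rightarrow> (nat \<Rightarrow> padic) \<Rightarrow> (nat \<Rightarrow> padic) set" where
  "orth_compl p n QL w = {x \<in> Zp_vec p (n+4). bil p (Q0 p n QL) w x = zp_zero}"

text \<open>H perp Lambda = Z_p^(k+2), coordinates 0,1 the hyperbolic plane, then Lambda = Z_p^k.\<close>
definition hyp_sum :: "int \<Rightarrow> ((nat \<Rightarrow> padic) \<Rightarrow> padic) \<Rightarrow> (nat \<Rightarrow> padic) \<Rightarrow> padic" where
  "hyp_sum p QLam y = zp_add p (zp_mul p (y 0) (y 1)) (QLam (\<lambda>i. y (i + 2)))"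

definition isometry_onto ::
  "int \<Rightarrow> nat \<Rightarrow> ((nat \<Rightarrow> padic) \<Rightarrow> padic) \<Rightarrow> (nat \<Rightarrow> padic) set
   \<Rightarrow> ((nat \<Rightarrow> padic) \<Rightarrow> padic) \<Rightarrow> ((nat \<Rightarrow> padic) \<Rightarrow> (nat \<Rightarrow> padic)) \<Rightarrow> bool" where
  "isometry_onto p m Qs S Qt \<phi> \<longleftrightarrow>
     (\<forall>x\<in>Zp_vec p m. \<forall>y\<in>Zp_vec p m. \<phi> (vadd p x y) = vadd p (\<phi> x) (\<phi> y)) \<and>
     (\<forall>a\<in>Zp p. \<forall>x\<in>Zp_vec p m. \<phi> (smult p a x) = smult p a (\<phi> x)) \<and>
     inj_on \<phi> (Zp_vec p m) \<and> \<phi> ` Zp_vec p m = S \<and>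
     (\<forall>x\<in>Zp_vec p m. Qt (\<phi> x) = Qs x)"

end

theory Submission
  imports Defs "HOL-Library.Function_Algebras" "HOL-Number_Theory.Cong"
begin

(*
  Write w = (w_L, w_0, w_1, w_2, w_3) and let j be the content valuation of w:
  the largest j such that p^j divides w_0, ..., w_3 and all values <w_L, x>_L.
  It exists since Q(w) <> 0: if everything vanished, then 2 Q(w) = <w, w> = 0.
  The coordinate swaps inside H perp H and the Eichler transformations
    x |-> (x_L + x_0 y, x_0, x_1 - <x_L, y> - Q_L(y) x_0, x_2, x_3)
  are isometries of Lambda_0, so after applying one of them we may assume that
  w_1 has exact valuation j (w is a "pivot vector").  Then every coefficient of
  the linear form <w, .> is a Z_p-multiple of w_1, so x is orthogonal to w iff
  x_0 is a prescribed linear function of (x_L, x_1, x_2, x_3), and the change of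
  variables y_0 = x_2 - a_2 x_1, y_1 = x_3 - a_3 x_1 exhibits the complement as
  H perp Lambda, where Lambda = L + Z_p x_1 carries an explicit form.
*)

section \<open>Arithmetic in Z_p via reduction of integer sequences\<close>

text \<open>All ring operations on Z_p are coordinatewise integer operations followed by
  reduction modulo p^n at level n; this turns Z_p identities into ring identities in
  the function ring nat => int.\<close>

definition red :: "int \<Rightarrow> padic \<Rightarrow> padic" where
  "red p x = (\<lambda>n. x n mod p ^ n)"

definition compat :: "int \<Rightarrow> padic \<Rightarrow> bool" where
  "compat p x \<longleftrightarrow> (\<forall>n. x (Suc n) mod p ^ n = x n mod p ^ n)"

lemma zp_add_red: "zp_add p x y = red p (x + y)"
  by (simp add: zp_add_def red_def fun_eq_iff)
lemma zp_mul_red: "zp_mul p x y = red p (x * y)"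
  by (simp add: zp_mul_def red_def fun_eq_iff)
lemma zp_neg_red: "zp_neg p x = red p (- x)"
  by (simp add: zp_neg_def red_def fun_eq_iff)
lemma zp_zero_eq: "zp_zero = 0"
  by (simp add: zp_zero_def fun_eq_iff)
lemma zp_one_red: "zp_one p = red p 1"
  by (simp add: zp_one_def red_def fun_eq_iff)

lemma red_add1[simp]: "red p (red p a + b) = red p (a + b)"
  by (simp add: red_def fun_eq_iff mod_add_left_eq)
lemma red_add2[simp]: "red p (a + red p b) = red p (a + b)"
  by (simp add: red_def fun_eq_iff mod_add_right_eq)
lemma red_mul1[simp]: "red p (red p a * b) = red p (a * b)"
  by (simp add: red_def fun_eq_iff mod_mult_left_eq)
lemma red_mul2[simp]: "red p (a * red p b) = red p (a * b)"
  by (simp add: red_def fun_eq_iff mod_mult_right_eq)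
lemma red_neg[simp]: "red p (- red p a) = red p (- a)"
  by (simp add: red_def fun_eq_iff mod_minus_eq)
lemma red_diff1[simp]: "red p (red p a - b) = red p (a - b)"
  by (simp add: red_def fun_eq_iff mod_diff_left_eq)
lemma red_diff2[simp]: "red p (a - red p b) = red p (a - b)"
  by (simp add: red_def fun_eq_iff mod_diff_right_eq)
lemma red_red[simp]: "red p (red p a) = red p a"
  by (simp add: red_def fun_eq_iff)
lemma red_zero[simp]: "red p 0 = 0"
  by (simp add: red_def fun_eq_iff)

lemmas red_simps = red_add1 red_add2 red_mul1 red_mul2 red_neg red_diff1 red_diff2 red_red

lemma zp_sub_red: "zp_sub p x y = red p (x - y)"
  by (simp add: zp_sub_def zp_add_red zp_neg_red)

text \<open>Rewriting with these turns every Z_p expression into one reduced integer sequence;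
  an identity then follows from the corresponding ring identity (via red_eqI).\<close>
lemmas zp_red = zp_add_red zp_mul_red zp_neg_red zp_sub_red zp_zero_eq zp_one_red

lemma red_eqI: "a = b \<Longrightarrow> red p a = red p b" by simp

lemma red_apply: "red p x n = x n mod p ^ n"
  by (simp add: red_def)

lemma vadd_apply: "vadd p x y i = zp_add p (x i) (y i)" by (simp add: vadd_def)
lemma smult_apply: "smult p a x i = zp_mul p a (x i)" by (simp add: smult_def)

locale padic =
  fixes p :: int
  assumes prime_p: "prime p"
begin

lemma p_gt1: "p > 1" using prime_p by (simp add: prime_int_iff)
lemma pn_pos: "p ^ n > 0" using p_gt1 by simp
lemma p_nz[simp]: "p \<noteq> 0" using p_gt1 by simp

lemma Zp_range: "x \<in> Zp p \<Longrightarrow> 0 \<le> x n \<and> x n < p ^ n"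
  by (simp add: Zp_def)

lemma Zp_0: "x \<in> Zp p \<Longrightarrow> x 0 = 0"
  using Zp_range[of x 0] by simp

lemma Zp_red: "x \<in> Zp p \<Longrightarrow> red p x = x"
  unfolding Zp_def red_def fun_eq_iff using pn_pos by auto

lemma red_inj: "a \<in> Zp p \<Longrightarrow> b \<in> Zp p \<Longrightarrow> red p a = red p b \<Longrightarrow> a = b"
  by (simp add: Zp_red)

lemma red_Zp: "compat p x \<Longrightarrow> red p x \<in> Zp p"
  unfolding Zp_def compat_def red_def
proof (intro CollectI allI conjI)
  fix n assume h: "\<forall>n. x (Suc n) mod p ^ n = x n mod p ^ n"
  show "x n mod p ^ n \<in> {0..<p ^ n}" using pn_pos[of n] by simp
  have "p ^ n dvd p ^ Suc n" by simp
  then have "x (Suc n) mod p ^ Suc n mod p ^ n = x (Suc n) mod p ^ n"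
    by (simp add: mod_mod_cancel)
  then show "x (Suc n) mod p ^ Suc n mod p ^ n = x n mod p ^ n" using h by simp
qed

lemma compat_add[simp]: "compat p a \<Longrightarrow> compat p b \<Longrightarrow> compat p (a + b)"
  unfolding compat_def by (metis mod_add_eq plus_fun_apply)
lemma compat_mul[simp]: "compat p a \<Longrightarrow> compat p b \<Longrightarrow> compat p (a * b)"
  unfolding compat_def by (metis mod_mult_eq times_fun_apply)
lemma compat_diff[simp]: "compat p a \<Longrightarrow> compat p b \<Longrightarrow> compat p (a - b)"
  unfolding compat_def by (metis mod_diff_eq minus_apply)
lemma compat_neg[simp]: "compat p a \<Longrightarrow> compat p (- a)"
  unfolding compat_def by (metis mod_minus_eq uminus_apply)
lemma compat_1[simp]: "compat p 1" unfolding compat_def by simp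
lemma compat_Zp[simp]: "x \<in> Zp p \<Longrightarrow> compat p x"
  by (simp add: Zp_def compat_def)

lemma zp_add_Zp[simp]: "x \<in> Zp p \<Longrightarrow> y \<in> Zp p \<Longrightarrow> zp_add p x y \<in> Zp p"
  by (simp add: zp_add_red red_Zp)
lemma zp_mul_Zp[simp]: "x \<in> Zp p \<Longrightarrow> y \<in> Zp p \<Longrightarrow> zp_mul p x y \<in> Zp p"
  by (simp add: zp_mul_red red_Zp)
lemma zp_sub_Zp[simp]: "x \<in> Zp p \<Longrightarrow> y \<in> Zp p \<Longrightarrow> zp_sub p x y \<in> Zp p"
  by (simp add: zp_sub_red red_Zp)
lemma zp_neg_Zp[simp]: "x \<in> Zp p \<Longrightarrow> zp_neg p x \<in> Zp p"
  by (simp add: zp_neg_red red_Zp)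
lemma zero_Zp[simp]: "(0::padic) \<in> Zp p"
  by (simp add: Zp_def pn_pos)
lemma zp_one_Zp[simp]: "zp_one p \<in> Zp p"
  by (simp add: zp_one_red red_Zp)

subsection \<open>Valuations: divisibility by powers of p and units\<close>

definition p_pow :: "nat \<Rightarrow> padic" where "p_pow k = red p (\<lambda>n. p ^ k)"

lemma p_pow_Zp[simp]: "p_pow k \<in> Zp p"
  unfolding p_pow_def by (rule red_Zp) (simp add: compat_def)

lemma p_pow_apply: "p_pow j m = p ^ j mod p ^ m"
  by (simp add: p_pow_def red_def)

lemma zp_mul_apply: "zp_mul p x y m = (x m * y m) mod p ^ m"
  by (simp add: zp_mul_def)

lemma Zp_level: "x \<in> Zp p \<Longrightarrow> m \<le> k \<Longrightarrow> x k mod p ^ m = x m"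
proof (induction k)
  case 0
  then have "0 \<le> x 0" "x 0 < 1" by (auto simp: Zp_def dest: spec[of _ 0])
  then show ?case using 0 by simp
next
  case (Suc k)
  show ?case
  proof (cases "m = Suc k")
    case True
    have "0 \<le> x (Suc k)" "x (Suc k) < p ^ Suc k" using Zp_range[OF Suc.prems(1), of "Suc k"] by blast+
    then show ?thesis unfolding True by (rule mod_pos_pos_trivial)
  next
    case False
    then have mk: "m \<le> k" using Suc.prems by simp
    have "p ^ m dvd p ^ k" using mk by (simp add: le_imp_power_dvd)
    then have "x (Suc k) mod p ^ m = x (Suc k) mod p ^ k mod p ^ m"
      by (simp add: mod_mod_cancel)
    also have "\<dots> = x k mod p ^ m" using Suc.prems by (simp add: Zp_def)
    finally show ?thesis using Suc.IH[OF Suc.prems(1) mk] by simp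
  qed
qed

lemma Zp_eq_0I: "c \<in> Zp p \<Longrightarrow> (\<And>m. c (Suc m) = 0) \<Longrightarrow> c = 0"
  by (rule ext, case_tac x) (auto dest: Zp_range[of c 0])

lemma vanish_level_dvd: "x \<in> Zp p \<Longrightarrow> x k = 0 \<Longrightarrow> p ^ k dvd x (n + k)"
  using Zp_level[of x k "n + k"] by (simp add: mod_eq_0_iff_dvd)

definition shift_div :: "nat \<Rightarrow> padic \<Rightarrow> padic" where
  "shift_div k x = (\<lambda>n. x (n + k) div p ^ k)"

lemma shift_div_Zp:
  assumes x: "x \<in> Zp p" and xk: "x k = 0"
  shows "shift_div k x \<in> Zp p"
  unfolding Zp_def
proof (intro CollectI allI conjI)
  fix n
  let ?z = "shift_div k x"
  have pk: "p ^ k > 0" by (rule pn_pos)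
  have r: "0 \<le> x (n + k)" "x (n + k) < p ^ n * p ^ k"
    using Zp_range[OF x, of "n + k"] by (simp_all add: power_add)
  have "0 \<le> ?z n" unfolding shift_div_def using r pk by (simp add: div_int_pos_iff)
  moreover have "?z n < p ^ n" unfolding shift_div_def using r pk
    by (smt (verit) minus_div_mult_eq_mod mult_right_less_imp_less pos_mod_sign)
  ultimately show "?z n \<in> {0..<p ^ n}" by simp
  obtain t where t: "x (Suc n + k) = p ^ k * t"
    using vanish_level_dvd[OF x xk, of "Suc n"] by (auto simp: dvd_def)
  have "x (n + k) = x (Suc n + k) mod p ^ (n + k)" using Zp_level[OF x, of "n+k" "Suc n + k"] by simp
  also have "\<dots> = p ^ k * (t mod p ^ n)"
  proof -
    have e: "p ^ (n + k) = p ^ k * p ^ n" by (simp add: power_add)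
    show ?thesis by (simp only: t e mult_mod_right)
  qed
  finally have "?z n = t mod p ^ n" unfolding shift_div_def using pk by simp
  moreover have "?z (Suc n) = t" unfolding shift_div_def using t pk by simp
  ultimately show "?z (Suc n) mod p ^ n = ?z n" by simp
qed

lemma shift_div_mult:
  assumes x: "x \<in> Zp p" and xk: "x k = 0"
  shows "zp_mul p (p_pow k) (shift_div k x) = x"
proof (rule ext)
  fix n
  have "zp_mul p (p_pow k) (shift_div k x) n = (p ^ k mod p ^ n * shift_div k x n) mod p ^ n"
    by (simp add: zp_mul_apply p_pow_apply)
  also have "\<dots> = (p ^ k * shift_div k x n) mod p ^ n" by (simp add: mod_mult_left_eq)
  also have "p ^ k * shift_div k x n = x (n + k)"
    unfolding shift_div_def using vanish_level_dvd[OF x xk, of n] by simp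
  also have "x (n + k) mod p ^ n = x n" using Zp_level[OF x, of n "n + k"] by simp
  finally show "zp_mul p (p_pow k) (shift_div k x) n = x n" .
qed

lemma divisible_by_p_pow:
  assumes x: "x \<in> Zp p" and xk: "x k = 0"
  shows "\<exists>z\<in>Zp p. x = zp_mul p (p_pow k) z"
  using shift_div_Zp[OF x xk] shift_div_mult[OF x xk] by metis

lemma mod_inverse_unique:
  fixes a r s m :: int
  assumes "(a * r) mod m = 1 mod m" "(a * s) mod m = 1 mod m"
  shows "r mod m = s mod m"
proof -
  have ar: "[a * r = 1] (mod m)" and as: "[a * s = 1] (mod m)" using assms by (auto simp: cong_def)
  have "[r * (a * s) = r * 1] (mod m)" by (rule cong_mult[OF cong_refl as])
  moreover have "[s * (a * r) = s * 1] (mod m)" by (rule cong_mult[OF cong_refl ar])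
  moreover have "r * (a * s) = s * (a * r)" by simp
  ultimately have "[r = s] (mod m)" by (metis cong_sym cong_trans mult.right_neutral)
  then show ?thesis by (simp add: cong_def)
qed

lemma unit_levels_coprime:
  assumes u: "u \<in> Zp p" and u1: "u 1 \<noteq> 0"
  shows "coprime (u n) (p ^ n)"
proof (cases "n = 0")
  case True then show ?thesis by simp
next
  case False
  have "u n mod p = u 1" using Zp_level[OF u, of 1 n] False by simp
  then have "\<not> p dvd u n" using u1 by (auto simp: dvd_eq_mod_eq_0)
  then have "coprime p (u n)" using prime_p by (simp add: prime_imp_coprime)
  then show ?thesis by (simp add: coprime_commute)
qed

text \<open>An element of Z_p that is nonzero modulo p is a unit; its inverse is assembled
  from the inverses modulo p^n, which are compatible by uniqueness.\<close>
lemma unit_has_inverse: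
  assumes u: "u \<in> Zp p" and u1: "u 1 \<noteq> 0"
  shows "\<exists>v\<in>Zp p. zp_mul p u v = zp_one p"
proof -
  note cop = unit_levels_coprime[OF u u1]
  define inv_at where "inv_at n r \<longleftrightarrow> r \<in> {0..<p ^ n} \<and> (u n * r) mod p ^ n = 1 mod p ^ n" for n r
  have ex: "\<exists>r. inv_at n r" for n
  proof -
    obtain b where "[u n * b = 1] (mod p ^ n)" using cong_solve_coprime_int[OF cop[of n]] by blast
    then have "(u n * (b mod p ^ n)) mod p ^ n = 1 mod p ^ n"
      by (simp add: cong_def mod_mult_right_eq)
    then show ?thesis unfolding inv_at_def using pn_pos[of n] by (intro exI[of _ "b mod p ^ n"]) simp
  qed
  define v where "v n = (SOME r. inv_at n r)" for n
  have vP: "inv_at n (v n)" for n unfolding v_def using ex someI_ex by metis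
  have vZ: "v \<in> Zp p"
    unfolding Zp_def
  proof (intro CollectI allI conjI)
    fix n
    show "v n \<in> {0..<p ^ n}" using vP[of n] by (simp add: inv_at_def)
    have a: "(u n * v n) mod p ^ n = 1 mod p ^ n" using vP[of n] by (simp add: inv_at_def)
    have un: "u (Suc n) mod p ^ n = u n" using u by (simp add: Zp_def)
    have dv: "p ^ n dvd p ^ Suc n" by simp
    have "(u (Suc n) * v (Suc n)) mod p ^ Suc n = 1 mod p ^ Suc n"
      using vP[of "Suc n"] by (simp add: inv_at_def)
    then have "(u (Suc n) * v (Suc n)) mod p ^ n = 1 mod p ^ n"
      by (metis dv mod_mod_cancel)
    then have "(u n * v (Suc n)) mod p ^ n = 1 mod p ^ n"
      using un by (metis mod_mult_left_eq)
    from mod_inverse_unique[OF this a] have "v (Suc n) mod p ^ n = v n mod p ^ n" .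
    then show "v (Suc n) mod p ^ n = v n" using vP[of n] by (simp add: inv_at_def)
  qed
  have "zp_mul p u v = zp_one p"
    using vP by (simp add: fun_eq_iff zp_mul_def zp_one_def inv_at_def)
  with vZ show ?thesis by blast
qed

lemma exact_valuation_factor:
  assumes A: "A \<in> Zp p" and Aj: "A j = 0" and As: "A (Suc j) \<noteq> 0"
  shows "\<exists>u\<in>Zp p. u 1 \<noteq> 0 \<and> A = zp_mul p (p_pow j) u"
proof -
  obtain z where z: "z \<in> Zp p" and Az: "A = zp_mul p (p_pow j) z"
    using divisible_by_p_pow[OF A Aj] by blast
  have "z 1 \<noteq> 0"
  proof
    assume z1: "z 1 = 0"
    have "z (Suc j) mod p = z 1" using Zp_level[OF z, of 1 "Suc j"] by simp
    then obtain t where t: "z (Suc j) = p * t" using z1 by (auto simp: dvd_def dvd_eq_mod_eq_0)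
    have "A (Suc j) = (p ^ j mod p ^ Suc j * z (Suc j)) mod p ^ Suc j"
      by (simp add: Az zp_mul_apply p_pow_apply)
    also have "\<dots> = (p ^ j * z (Suc j)) mod p ^ Suc j" by (simp add: mod_mult_left_eq)
    also have "p ^ j * z (Suc j) = p ^ Suc j * t" using t by simp
    finally show False using As by simp
  qed
  with z Az show ?thesis by blast
qed

lemma divisible_by_exact:
  assumes A: "A = zp_mul p (p_pow j) u" and v: "v \<in> Zp p"
    and uv: "zp_mul p u v = zp_one p"
    and c: "c \<in> Zp p" and cj: "c j = 0"
  shows "\<exists>q\<in>Zp p. c = zp_mul p A q"
proof -
  obtain z where z: "z \<in> Zp p" and cz: "c = zp_mul p (p_pow j) z"
    using divisible_by_p_pow[OF c cj] by blast
  have uv': "red p (u * v) = red p 1" using uv by (simp add: zp_red)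
  have "zp_mul p A (zp_mul p v z) = red p ((p_pow j * z) * (u * v))"
    by (simp only: A zp_red red_simps) (rule red_eqI, simp add: algebra_simps)
  also have "\<dots> = red p ((p_pow j * z) * red p (u * v))" by simp
  also have "\<dots> = c" by (simp only: uv' red_mul2 cz zp_red) simp
  finally show ?thesis using v z by (intro bexI[of _ "zp_mul p v z"]) auto
qed

lemma p_pow_cancel:
  assumes q: "q \<in> Zp p" and q': "q' \<in> Zp p" and e: "zp_mul p (p_pow j) q = zp_mul p (p_pow j) q'"
  shows "q = q'"
proof (rule ext)
  fix m
  have lv: "zp_mul p (p_pow j) x (m + j) = p ^ j * x m" if x: "x \<in> Zp p" for x
  proof -
    have "zp_mul p (p_pow j) x (m + j) = (p ^ j mod p ^ (m + j) * x (m + j)) mod p ^ (m + j)"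
      by (simp add: zp_mul_apply p_pow_apply)
    also have "\<dots> = (p ^ j * x (m + j)) mod (p ^ m * p ^ j)"
      by (simp add: mod_mult_left_eq power_add)
    also have "\<dots> = (p ^ j * x (m + j)) mod (p ^ j * p ^ m)"
      by (simp only: mult.commute[of "p ^ m"])
    also have "\<dots> = p ^ j * (x (m + j) mod p ^ m)" by (rule mult_mod_right[symmetric])
    also have "x (m + j) mod p ^ m = x m" using Zp_level[OF x, of m "m + j"] by simp
    finally show ?thesis .
  qed
  have "p ^ j * q m = p ^ j * q' m" using lv[OF q] lv[OF q'] e by metis
  then show "q m = q' m" using pn_pos[of j] by simp
qed

lemma exact_cancel:
  assumes A: "A = zp_mul p (p_pow j) u" and uv: "zp_mul p u v = zp_one p"
    and q: "q \<in> Zp p" and q': "q' \<in> Zp p" and e: "zp_mul p A q = zp_mul p A q'"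
  shows "q = q'"
proof -
  have uv': "red p (u * v) = red p 1" using uv by (simp add: zp_red)
  have undo: "zp_mul p (p_pow j) x = red p ((p_pow j * u * x) * v)" for x
  proof -
    have "red p ((p_pow j * u * x) * v) = red p ((p_pow j * x) * red p (u * v))"
      by (simp only: red_simps) (rule red_eqI, simp add: algebra_simps)
    also have "\<dots> = zp_mul p (p_pow j) x" by (simp only: uv' red_mul2) (simp add: zp_red)
    finally show ?thesis by simp
  qed
  have "red p (p_pow j * u * q) = red p (p_pow j * u * q')" using e by (simp only: A zp_red red_simps)
  then have "red p (red p (p_pow j * u * q) * v) = red p (red p (p_pow j * u * q') * v)" by simp
  then have "zp_mul p (p_pow j) q = zp_mul p (p_pow j) q'" by (simp only: undo red_mul1)
  then show ?thesis using p_pow_cancel q q' by blast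
qed

text \<open>If 2q = 0 then q = 0 (also for p = 2, since Z_p is torsion free).\<close>
lemma double_eq_0:
  assumes q: "q \<in> Zp p" and e: "red p (2 * q) = 0"
  shows "q = 0"
proof (rule ext)
  fix m
  have "(2 * q (Suc m)) mod p ^ Suc m = 0" using fun_cong[OF e, of "Suc m"] by (simp add: red_def)
  then have d: "p ^ Suc m dvd 2 * q (Suc m)" by (simp add: dvd_eq_mod_eq_0)
  have "p ^ m dvd q (Suc m)"
  proof (cases "p = 2")
    case True
    then show ?thesis using d by simp
  next
    case False
    have "\<not> p dvd 2"
    proof
      assume "p dvd 2"
      then have "p \<le> 2" by (simp add: zdvd_imp_le)
      then show False using p_gt1 False by simp
    qed
    then have "coprime p 2" by (rule prime_imp_coprime[OF prime_p])
    then have "coprime (p ^ Suc m) 2" by simp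
    then have "p ^ Suc m dvd q (Suc m)" using d coprime_dvd_mult_right_iff by blast
    then show ?thesis by (metis dvd_mult_right power_Suc)
  qed
  then have "q (Suc m) mod p ^ m = 0" by (simp add: dvd_eq_mod_eq_0)
  then show "q m = 0 m" using q by (simp add: Zp_def)
qed

end


section \<open>Vectors and quadratic forms on Z_p^m\<close>

lemma const_zero_fun[simp]: "(\<lambda>a::nat. 0::int) = 0" by (simp add: fun_eq_iff)
lemma zp_add_00[simp]: "zp_add p 0 0 = 0" by (simp add: zp_add_def fun_eq_iff)
lemma zp_mul_0[simp]: "zp_mul p a 0 = 0" by (simp add: zp_mul_def fun_eq_iff)

lemma vtrunc_vadd: "vtrunc n (vadd p x y) = vadd p (vtrunc n x) (vtrunc n y)"
  by (simp add: vtrunc_def vadd_def fun_eq_iff zp_zero_eq)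
lemma vtrunc_smult: "vtrunc n (smult p a x) = smult p a (vtrunc n x)"
  by (simp add: vtrunc_def smult_def fun_eq_iff zp_zero_eq)

lemma vadd_comm: "vadd p x y = vadd p y x"
  by (simp add: vadd_def zp_add_red add.commute)

lemma bil_sym: "bil p Q x y = bil p Q y x"
  unfolding bil_def by (simp only: vadd_comm[of p x y] zp_red red_simps) (rule red_eqI, simp add: algebra_simps)

lemma bil_Q0: "bil p (Q0 p n QL) x y =
   zp_add p (zp_add p (zp_add p (zp_add p (bil p QL (vtrunc n x) (vtrunc n y))
     (zp_mul p (x n) (y (n+1)))) (zp_mul p (x (n+1)) (y n)))
     (zp_mul p (x (n+2)) (y (n+3)))) (zp_mul p (x (n+3)) (y (n+2)))"
  by (simp only: bil_def Q0_def vtrunc_vadd vadd_apply zp_red red_simps) (rule red_eqI, simp add: algebra_simps)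

context padic
begin

lemma Zp_vecI: "(\<And>i. i < m \<Longrightarrow> v i \<in> Zp p) \<Longrightarrow> (\<And>i. i \<ge> m \<Longrightarrow> v i = 0) \<Longrightarrow> v \<in> Zp_vec p m"
  by (simp add: Zp_vec_def zp_zero_eq)
lemma Zp_vec_zero: "v \<in> Zp_vec p m \<Longrightarrow> i \<ge> m \<Longrightarrow> v i = 0"
  by (simp add: Zp_vec_def zp_zero_eq)
lemma Zp_vec_Zp: "v \<in> Zp_vec p m \<Longrightarrow> v i \<in> Zp p"
  by (cases "i < m") (auto simp: Zp_vec_def zp_zero_eq)

lemma vadd_vec[simp]: "x \<in> Zp_vec p m \<Longrightarrow> y \<in> Zp_vec p m \<Longrightarrow> vadd p x y \<in> Zp_vec p m"
  by (rule Zp_vecI) (auto simp: vadd_apply Zp_vec_Zp Zp_vec_zero)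
lemma smult_vec[simp]: "a \<in> Zp p \<Longrightarrow> x \<in> Zp_vec p m \<Longrightarrow> smult p a x \<in> Zp_vec p m"
  by (rule Zp_vecI) (auto simp: smult_apply Zp_vec_Zp Zp_vec_zero)
lemma vtrunc_vec[simp]: "x \<in> Zp_vec p m \<Longrightarrow> vtrunc n x \<in> Zp_vec p n"
  by (rule Zp_vecI) (auto simp: vtrunc_def Zp_vec_Zp zp_zero_eq)

context
  fixes m :: nat and Q :: "(nat \<Rightarrow> padic) \<Rightarrow> padic"
  assumes qf: "is_quadform p m Q"
begin

lemma qf_Zp[simp]: "x \<in> Zp_vec p m \<Longrightarrow> Q x \<in> Zp p"
  using qf by (simp add: is_quadform_def)
lemma qf_smult: "a \<in> Zp p \<Longrightarrow> x \<in> Zp_vec p m \<Longrightarrow> Q (smult p a x) = zp_mul p (zp_mul p a a) (Q x)"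
  using qf by (simp add: is_quadform_def)
lemma bil_add_left: "x \<in> Zp_vec p m \<Longrightarrow> y \<in> Zp_vec p m \<Longrightarrow> z \<in> Zp_vec p m \<Longrightarrow>
   bil p Q (vadd p x y) z = zp_add p (bil p Q x z) (bil p Q y z)"
  using qf by (simp add: is_quadform_def)
lemma bil_smult_left: "a \<in> Zp p \<Longrightarrow> x \<in> Zp_vec p m \<Longrightarrow> y \<in> Zp_vec p m \<Longrightarrow>
   bil p Q (smult p a x) y = zp_mul p a (bil p Q x y)"
  using qf by (simp add: is_quadform_def)
lemma bil_add_right: "x \<in> Zp_vec p m \<Longrightarrow> y \<in> Zp_vec p m \<Longrightarrow> z \<in> Zp_vec p m \<Longrightarrow>
   bil p Q z (vadd p x y) = zp_add p (bil p Q z x) (bil p Q z y)"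
  using bil_add_left bil_sym by metis
lemma bil_smult_right: "a \<in> Zp p \<Longrightarrow> x \<in> Zp_vec p m \<Longrightarrow> y \<in> Zp_vec p m \<Longrightarrow>
   bil p Q y (smult p a x) = zp_mul p a (bil p Q y x)"
  using bil_smult_left bil_sym by metis
lemma bil_Zp[simp]: "x \<in> Zp_vec p m \<Longrightarrow> y \<in> Zp_vec p m \<Longrightarrow> bil p Q x y \<in> Zp p"
  unfolding bil_def by simp

lemma Q_add: "x \<in> Zp_vec p m \<Longrightarrow> y \<in> Zp_vec p m \<Longrightarrow>
   Q (vadd p x y) = zp_add p (zp_add p (Q x) (Q y)) (bil p Q x y)"
proof -
  assume x: "x \<in> Zp_vec p m" and y: "y \<in> Zp_vec p m"
  have "zp_add p (zp_add p (Q x) (Q y)) (bil p Q x y) = red p (Q (vadd p x y))"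
    by (simp only: bil_def zp_red red_simps) (rule red_eqI, simp add: algebra_simps)
  also have "\<dots> = Q (vadd p x y)" using x y by (simp add: Zp_red)
  finally show ?thesis by simp
qed

text \<open><y, y> = 2 Q(y), from homogeneity applied to y + y = 2 y.\<close>
lemma bil_self: "y \<in> Zp_vec p m \<Longrightarrow> bil p Q y y = zp_mul p (zp_add p (zp_one p) (zp_one p)) (Q y)"
proof -
  assume y: "y \<in> Zp_vec p m"
  let ?two = "zp_add p (zp_one p) (zp_one p)"
  have yy: "vadd p y y = smult p ?two y"
    by (simp add: vadd_def smult_def fun_eq_iff zp_red)
  have "Q (smult p ?two y) = zp_mul p (zp_mul p ?two ?two) (Q y)"
    by (rule qf_smult) (simp_all add: y)
  then show ?thesis
    unfolding bil_def yy by (simp only: zp_red red_simps) (rule red_eqI, simp add: algebra_simps)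
qed

end

end

section \<open>The lattice Lambda_0 = L perp H^2 and its isometric automorphisms\<close>

locale Lambda0 = padic +
  fixes n :: nat and QL :: "(nat \<Rightarrow> padic) \<Rightarrow> padic"
  assumes qfL: "is_quadform p n QL"
begin

abbreviation V :: "(nat \<Rightarrow> padic) set" where "V \<equiv> Zp_vec p (n + 4)"
abbreviation B0 :: "(nat \<Rightarrow> padic) \<Rightarrow> (nat \<Rightarrow> padic) \<Rightarrow> padic" where "B0 \<equiv> bil p (Q0 p n QL)"
abbreviation BL :: "(nat \<Rightarrow> padic) \<Rightarrow> (nat \<Rightarrow> padic) \<Rightarrow> padic" where "BL \<equiv> bil p QL"

lemma Q0_Zp[simp]: "x \<in> V \<Longrightarrow> Q0 p n QL x \<in> Zp p"
  unfolding Q0_def using qf_Zp[OF qfL] by (simp add: Zp_vec_Zp)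

lemma B0_self: "w \<in> V \<Longrightarrow> B0 w w = zp_mul p (zp_add p (zp_one p) (zp_one p)) (Q0 p n QL w)"
  unfolding bil_Q0 bil_self[OF qfL vtrunc_vec] Q0_def
  by (simp only: zp_red red_simps) (rule red_eqI, simp add: algebra_simps)

definition splits_H :: "(nat \<Rightarrow> padic) \<Rightarrow> bool" where
  "splits_H w \<longleftrightarrow> (\<exists>k QLam \<phi>. is_quadform p k QLam \<and>
     isometry_onto p (k + 2) (hyp_sum p QLam) (orth_compl p n QL w) (Q0 p n QL) \<phi>)"

definition isometric_auto :: "((nat \<Rightarrow> padic) \<Rightarrow> (nat \<Rightarrow> padic)) \<Rightarrow> ((nat \<Rightarrow> padic) \<Rightarrow> (nat \<Rightarrow> padic)) \<Rightarrow> bool"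
  where "isometric_auto h g \<longleftrightarrow>
    (\<forall>x\<in>V. \<forall>y\<in>V. h (vadd p x y) = vadd p (h x) (h y)) \<and>
    (\<forall>a\<in>Zp p. \<forall>x\<in>V. h (smult p a x) = smult p a (h x)) \<and>
    (\<forall>x\<in>V. h x \<in> V \<and> g x \<in> V \<and> h (g x) = x \<and> g (h x) = x \<and> Q0 p n QL (h x) = Q0 p n QL x)"

lemma isometric_autoD:
  assumes "isometric_auto h g"
  shows "\<And>x y. x \<in> V \<Longrightarrow> y \<in> V \<Longrightarrow> h (vadd p x y) = vadd p (h x) (h y)"
    and "\<And>a x. a \<in> Zp p \<Longrightarrow> x \<in> V \<Longrightarrow> h (smult p a x) = smult p a (h x)"
    and "\<And>x. x \<in> V \<Longrightarrow> h x \<in> V" and "\<And>x. x \<in> V \<Longrightarrow> g x \<in> V"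
    and "\<And>x. x \<in> V \<Longrightarrow> h (g x) = x" and "\<And>x. x \<in> V \<Longrightarrow> g (h x) = x"
    and "\<And>x. x \<in> V \<Longrightarrow> Q0 p n QL (h x) = Q0 p n QL x"
  using assms unfolding isometric_auto_def by blast+

lemma auto_preserves_B0:
  assumes auto: "isometric_auto h g" and "x \<in> V" "y \<in> V"
  shows "B0 (h x) (h y) = B0 x y"
  unfolding bil_def using assms
  by (simp add: isometric_autoD(7)[OF auto] flip: isometric_autoD(1)[OF auto])

lemma auto_image_orth_compl:
  assumes auto: "isometric_auto h g" and w: "w \<in> V"
  shows "h ` orth_compl p n QL (g w) = orth_compl p n QL w"
proof
  note h = isometric_autoD[OF auto]
  show "h ` orth_compl p n QL (g w) \<subseteq> orth_compl p n QL w"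
  proof
    fix z assume "z \<in> h ` orth_compl p n QL (g w)"
    then obtain x where x: "x \<in> V" "B0 (g w) x = zp_zero" and z: "z = h x"
      by (auto simp: orth_compl_def)
    have "B0 w z = B0 (h (g w)) (h x)" using h(5) w z by simp
    also have "\<dots> = zp_zero" using auto_preserves_B0[OF auto h(4)[OF w] x(1)] x(2) by simp
    finally show "z \<in> orth_compl p n QL w" using h(3) x(1) z by (simp add: orth_compl_def)
  qed
  show "orth_compl p n QL w \<subseteq> h ` orth_compl p n QL (g w)"
  proof
    fix z assume "z \<in> orth_compl p n QL w"
    then have z: "z \<in> V" "B0 w z = zp_zero" by (auto simp: orth_compl_def)
    have "B0 (g w) (g z) = B0 (h (g w)) (h (g z))" using auto_preserves_B0[OF auto] h(4) w z(1) by simp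
    also have "\<dots> = zp_zero" using h(5) w z by simp
    finally have "g z \<in> orth_compl p n QL (g w)" using h(4) z(1) by (simp add: orth_compl_def)
    then show "z \<in> h ` orth_compl p n QL (g w)" using h(5) z(1) by (metis image_eqI)
  qed
qed

lemma isometry_onto_auto:
  assumes auto: "isometric_auto h g" and S: "S \<subseteq> V"
    and iso: "isometry_onto p m Qs S (Q0 p n QL) \<phi>"
  shows "isometry_onto p m Qs (h ` S) (Q0 p n QL) (h \<circ> \<phi>)"
proof -
  note h = isometric_autoD[OF auto]
  have phiV: "\<phi> x \<in> V" if "x \<in> Zp_vec p m" for x
    using iso S that unfolding isometry_onto_def by blast
  have inj_h: "inj_on h V" by (metis h(6) inj_on_inverseI)
  show ?thesis
    unfolding isometry_onto_def
  proof (intro conjI ballI)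
    fix x y assume "x \<in> Zp_vec p m" "y \<in> Zp_vec p m"
    then show "(h \<circ> \<phi>) (vadd p x y) = vadd p ((h \<circ> \<phi>) x) ((h \<circ> \<phi>) y)"
      using iso phiV h(1) unfolding isometry_onto_def by simp
  next
    fix a x assume "a \<in> Zp p" "x \<in> Zp_vec p m"
    then show "(h \<circ> \<phi>) (smult p a x) = smult p a ((h \<circ> \<phi>) x)"
      using iso phiV h(2) unfolding isometry_onto_def by simp
  next
    show "inj_on (h \<circ> \<phi>) (Zp_vec p m)"
      using iso phiV inj_h unfolding isometry_onto_def by (metis comp_inj_on image_subsetI inj_on_subset)
  next
    show "(h \<circ> \<phi>) ` Zp_vec p m = h ` S"
      using iso unfolding isometry_onto_def by (metis image_comp)
  next
    fix x assume "x \<in> Zp_vec p m"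
    then show "Q0 p n QL ((h \<circ> \<phi>) x) = Qs x"
      using iso phiV h(7) unfolding isometry_onto_def by simp
  qed
qed

lemma splits_H_transport:
  assumes auto: "isometric_auto h g" and w: "w \<in> V" and split: "splits_H (g w)"
  shows "splits_H w"
proof -
  obtain k QLam \<phi> where qf: "is_quadform p k QLam"
    and iso: "isometry_onto p (k + 2) (hyp_sum p QLam) (orth_compl p n QL (g w)) (Q0 p n QL) \<phi>"
    using split unfolding splits_H_def by blast
  have "orth_compl p n QL (g w) \<subseteq> V" by (auto simp: orth_compl_def)
  from isometry_onto_auto[OF auto this iso] show ?thesis
    unfolding auto_image_orth_compl[OF auto w] splits_H_def using qf by blast
qed

definition perm_H :: "(nat \<Rightarrow> nat) \<Rightarrow> (nat \<Rightarrow> padic) \<Rightarrow> (nat \<Rightarrow> padic)" where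
  "perm_H \<sigma> x = (\<lambda>i. if n \<le> i \<and> i < n + 4 then x (n + \<sigma> (i - n)) else x i)"

lemma perm_H_apply:
  "perm_H \<sigma> x n = x (n + \<sigma> 0)" "perm_H \<sigma> x (n+1) = x (n + \<sigma> 1)"
  "perm_H \<sigma> x (n+2) = x (n + \<sigma> 2)" "perm_H \<sigma> x (n+3) = x (n + \<sigma> 3)"
  "vtrunc n (perm_H \<sigma> x) = vtrunc n x"
  by (simp_all add: perm_H_def vtrunc_def fun_eq_iff)

lemma perm_H_auto:
  assumes ok1: "\<And>k. k < 4 \<Longrightarrow> \<sigma> k < 4" and ok2: "\<And>k. k < 4 \<Longrightarrow> \<sigma> (\<sigma> k) = k"
    and Q: "\<And>x. Q0 p n QL (perm_H \<sigma> x) = Q0 p n QL x"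
  shows "isometric_auto (perm_H \<sigma>) (perm_H \<sigma>)"
proof -
  have "perm_H \<sigma> x \<in> V" if "x \<in> V" for x
    by (rule Zp_vecI) (use that ok1 in \<open>auto simp: perm_H_def Zp_vec_Zp Zp_vec_zero\<close>)
  moreover have "perm_H \<sigma> (perm_H \<sigma> x) = x" for x
    using ok1 ok2 by (auto simp: perm_H_def fun_eq_iff)
  moreover have "perm_H \<sigma> (vadd p x y) = vadd p (perm_H \<sigma> x) (perm_H \<sigma> y)" for x y
    by (simp add: perm_H_def vadd_def fun_eq_iff)
  moreover have "perm_H \<sigma> (smult p a x) = smult p a (perm_H \<sigma> x)" for a x
    by (simp add: perm_H_def smult_def fun_eq_iff)
  ultimately show ?thesis
    unfolding isometric_auto_def using Q by blast
qed

definition swap_in_plane :: "nat \<Rightarrow> nat" where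
  "swap_in_plane k = (if k = 0 then 1 else if k = 1 then 0 else k)"
definition swap_planes :: "nat \<Rightarrow> nat" where
  "swap_planes k = (if k = 0 then 2 else if k = 1 then 3 else if k = 2 then 0 else if k = 3 then 1 else k)"
definition swap_across :: "nat \<Rightarrow> nat" where
  "swap_across k = (if k < 4 then 3 - k else k)"

lemma swap_in_plane_auto: "isometric_auto (perm_H swap_in_plane) (perm_H swap_in_plane)"
proof (rule perm_H_auto)
  show "Q0 p n QL (perm_H swap_in_plane x) = Q0 p n QL x" for x
    unfolding Q0_def perm_H_apply
    by (simp add: swap_in_plane_def zp_red) (rule red_eqI, simp add: algebra_simps)
qed (auto simp: swap_in_plane_def)

lemma swap_planes_auto: "isometric_auto (perm_H swap_planes) (perm_H swap_planes)"
proof (rule perm_H_auto)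
  show "Q0 p n QL (perm_H swap_planes x) = Q0 p n QL x" for x
    unfolding Q0_def perm_H_apply
    by (simp add: swap_planes_def zp_red) (rule red_eqI, simp add: algebra_simps)
qed (auto simp: swap_planes_def)

lemma swap_across_auto: "isometric_auto (perm_H swap_across) (perm_H swap_across)"
proof (rule perm_H_auto)
  show "Q0 p n QL (perm_H swap_across x) = Q0 p n QL x" for x
    unfolding Q0_def perm_H_apply
    by (simp add: swap_across_def zp_red) (rule red_eqI, simp add: algebra_simps)
qed (auto simp: swap_across_def)

end


subsection \<open>Eichler transformations\<close>

context Lambda0
begin

definition eichler :: "(nat \<Rightarrow> padic) \<Rightarrow> (nat \<Rightarrow> padic) \<Rightarrow> (nat \<Rightarrow> padic)" where
  "eichler y x = (\<lambda>i. if i < n then zp_add p (x i) (zp_mul p (x n) (y i))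
     else if i = n + 1 then zp_sub p (zp_sub p (x (n+1)) (BL (vtrunc n x) y)) (zp_mul p (QL y) (x n))
     else x i)"

definition vneg :: "(nat \<Rightarrow> padic) \<Rightarrow> (nat \<Rightarrow> padic)" where
  "vneg y = smult p (zp_neg p (zp_one p)) y"

lemma vneg_vec: "y \<in> Zp_vec p n \<Longrightarrow> vneg y \<in> Zp_vec p n"
  by (simp add: vneg_def)

lemma vneg_vneg: "y \<in> Zp_vec p n \<Longrightarrow> vneg (vneg y) = y"
proof (rule ext)
  fix i assume y: "y \<in> Zp_vec p n"
  have "red p (vneg (vneg y) i) = red p (y i)"
    by (simp only: vneg_def smult_apply zp_red red_simps) (rule red_eqI, simp add: algebra_simps)
  moreover have "vneg (vneg y) i \<in> Zp p" using y vneg_vec Zp_vec_Zp by blast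
  ultimately show "vneg (vneg y) i = y i" using y by (simp add: Zp_red Zp_vec_Zp)
qed

lemma eichler_apply:
  "eichler y x n = x n" "eichler y x (n+2) = x (n+2)" "eichler y x (n+3) = x (n+3)"
  "eichler y x (n+1) = zp_sub p (zp_sub p (x (n+1)) (BL (vtrunc n x) y)) (zp_mul p (QL y) (x n))"
  by (simp_all add: eichler_def)

lemma eichler_V: "y \<in> Zp_vec p n \<Longrightarrow> x \<in> V \<Longrightarrow> eichler y x \<in> V"
  by (rule Zp_vecI) (auto simp: eichler_def Zp_vec_Zp Zp_vec_zero qf_Zp[OF qfL] bil_Zp[OF qfL])

lemma eichler_trunc:
  "y \<in> Zp_vec p n \<Longrightarrow> vtrunc n (eichler y x) = vadd p (vtrunc n x) (smult p (x n) y)"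
  by (auto simp: eichler_def vtrunc_def vadd_def smult_def fun_eq_iff Zp_vec_zero zp_zero_eq)

text \<open>Eichler transformations preserve Q_0: the change of Q_L(x_L) is cancelled by
  the change of x_0 x_1.\<close>
lemma eichler_Q:
  assumes y: "y \<in> Zp_vec p n" and x: "x \<in> V"
  shows "Q0 p n QL (eichler y x) = Q0 p n QL x"
proof -
  have xn: "x n \<in> Zp p" using x Zp_vec_Zp by blast
  have tx: "vtrunc n x \<in> Zp_vec p n" using x by simp
  have sy: "smult p (x n) y \<in> Zp_vec p n" using xn y by simp
  show ?thesis
    unfolding Q0_def eichler_trunc[OF y] eichler_apply Q_add[OF qfL tx sy]
      qf_smult[OF qfL xn y] bil_smult_right[OF qfL xn y tx]
    by (simp only: zp_red red_simps) (rule red_eqI, simp add: algebra_simps)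
qed

lemma eichler_add:
  assumes y: "y \<in> Zp_vec p n" and a: "a \<in> V" and b: "b \<in> V"
  shows "eichler y (vadd p a b) = vadd p (eichler y a) (eichler y b)"
proof (rule ext)
  fix i
  have e: "BL (vtrunc n (vadd p a b)) y = zp_add p (BL (vtrunc n a) y) (BL (vtrunc n b) y)"
    unfolding vtrunc_vadd using a b y by (simp add: bil_add_left[OF qfL])
  consider "i < n" | "i = n + 1" | "\<not> i < n" "i \<noteq> n + 1" by blast
  then show "eichler y (vadd p a b) i = vadd p (eichler y a) (eichler y b) i"
  proof cases
    case 1 then show ?thesis
      by (simp add: eichler_def vadd_apply) (simp only: zp_red red_simps, rule red_eqI, simp add: algebra_simps)
  next
    case 2 then show ?thesis unfolding eichler_def
      by (simp add: vadd_apply e del: vtrunc_vadd) (simp only: zp_red red_simps, rule red_eqI, simp add: algebra_simps)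
  next
    case 3 then show ?thesis by (simp add: eichler_def vadd_apply)
  qed
qed

lemma eichler_smult:
  assumes y: "y \<in> Zp_vec p n" and c: "c \<in> Zp p" and a: "a \<in> V"
  shows "eichler y (smult p c a) = smult p c (eichler y a)"
proof (rule ext)
  fix i
  have e: "BL (vtrunc n (smult p c a)) y = zp_mul p c (BL (vtrunc n a) y)"
    unfolding vtrunc_smult using a c y by (simp add: bil_smult_left[OF qfL])
  consider "i < n" | "i = n + 1" | "\<not> i < n" "i \<noteq> n + 1" by blast
  then show "eichler y (smult p c a) i = smult p c (eichler y a) i"
  proof cases
    case 1 then show ?thesis
      by (simp add: eichler_def smult_apply) (simp only: zp_red red_simps, rule red_eqI, simp add: algebra_simps)
  next
    case 2 then show ?thesis unfolding eichler_def
      by (simp add: smult_apply e del: vtrunc_smult) (simp only: zp_red red_simps, rule red_eqI, simp add: algebra_simps)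
  next
    case 3 then show ?thesis by (simp add: eichler_def smult_apply)
  qed
qed

lemma eichler_inverse:
  assumes y: "y \<in> Zp_vec p n" and x: "x \<in> V"
  shows "eichler (vneg y) (eichler y x) = x"
proof (rule ext)
  fix i
  let ?m1 = "zp_neg p (zp_one p)"
  have xn: "x n \<in> Zp p" using x Zp_vec_Zp by blast
  have tx: "vtrunc n x \<in> Zp_vec p n" using x by simp
  have sy: "smult p (x n) y \<in> Zp_vec p n" using xn y by simp
  have m1: "?m1 \<in> Zp p" by simp
  have ny: "vneg y \<in> Zp_vec p n" using y by (rule vneg_vec)
  have e1: "BL (vtrunc n (eichler y x)) (vneg y) =
     zp_add p (BL (vtrunc n x) (vneg y)) (BL (smult p (x n) y) (vneg y))"
    unfolding eichler_trunc[OF y] by (rule bil_add_left[OF qfL tx sy ny])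
  have e2: "BL (vtrunc n x) (vneg y) = zp_mul p ?m1 (BL (vtrunc n x) y)"
    unfolding vneg_def by (rule bil_smult_right[OF qfL m1 y tx])
  have e3: "BL (smult p (x n) y) (vneg y) = zp_mul p (x n) (zp_mul p ?m1 (BL y y))"
    unfolding vneg_def bil_smult_left[OF qfL xn y ny[unfolded vneg_def]]
      bil_smult_right[OF qfL m1 y y] by simp
  have e4: "QL (vneg y) = zp_mul p (zp_mul p ?m1 ?m1) (QL y)"
    unfolding vneg_def by (rule qf_smult[OF qfL m1 y])
  have in_Zp: "eichler (vneg y) (eichler y x) i \<in> Zp p" "x i \<in> Zp p"
    using eichler_V[OF ny eichler_V[OF y x]] x Zp_vec_Zp by blast+
  consider "i < n" | "i = n + 1" | "\<not> i < n" "i \<noteq> n + 1" by blast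
  then show "eichler (vneg y) (eichler y x) i = x i"
  proof cases
    case 1
    have "red p (eichler (vneg y) (eichler y x) i) = red p (x i)"
      using 1 unfolding eichler_def vneg_def
      by (simp add: smult_apply) (simp only: zp_red red_simps, rule red_eqI, simp add: algebra_simps)
    then show ?thesis using in_Zp by (simp add: Zp_red)
  next
    case 2
    have "red p (eichler (vneg y) (eichler y x) i) = red p (x i)"
      unfolding 2 eichler_apply e1 e2 e3 e4 bil_self[OF qfL y]
      by (simp only: zp_red red_simps) (rule red_eqI, simp add: algebra_simps)
    then show ?thesis using in_Zp by (simp add: Zp_red)
  next
    case 3 then show ?thesis by (simp add: eichler_def)
  qed
qed

lemma eichler_auto:
  assumes y: "y \<in> Zp_vec p n"
  shows "isometric_auto (eichler (vneg y)) (eichler y)"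
proof -
  have ny: "vneg y \<in> Zp_vec p n" using y by (rule vneg_vec)
  have inv: "eichler y (eichler (vneg y) x) = x" if "x \<in> V" for x
    using eichler_inverse[OF ny that] vneg_vneg[OF y] by simp
  show ?thesis
    by (simp add: isometric_auto_def eichler_add[OF ny] eichler_smult[OF ny] eichler_V[OF ny]
        eichler_V[OF y] eichler_inverse[OF y] eichler_Q[OF ny] inv)
qed

end


section \<open>The pivot case\<close>

context Lambda0
begin

definition vanishes_at :: "(nat \<Rightarrow> padic) \<Rightarrow> nat \<Rightarrow> bool" where
  "vanishes_at w j \<longleftrightarrow> (\<forall>x\<in>Zp_vec p n. BL (vtrunc n w) x j = 0) \<and>
     w n j = 0 \<and> w (n+1) j = 0 \<and> w (n+2) j = 0 \<and> w (n+3) j = 0"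

end

text \<open>A pivot vector: the coefficient A = w_1 has exact valuation j, the minimum over
  all coefficients of <w, .>.  Hence every coefficient is a Z_p-multiple of A.\<close>
locale pivot_vector = Lambda0 +
  fixes w :: "nat \<Rightarrow> padic" and j :: nat
  assumes w_V: "w \<in> V" and w_vanishes: "vanishes_at w j" and A_exact: "w (n+1) (Suc j) \<noteq> 0"
begin

abbreviation A :: padic where "A \<equiv> w (n+1)"

lemma w_Zp: "w i \<in> Zp p" using w_V Zp_vec_Zp by blast
lemma A_Zp[simp]: "A \<in> Zp p" by (rule w_Zp)
lemma wL_vec: "vtrunc n w \<in> Zp_vec p n" using w_V by simp

lemma A_unit_factor: "\<exists>u v. A = zp_mul p (p_pow j) u \<and> v \<in> Zp p \<and> zp_mul p u v = zp_one p"
proof -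
  have "A j = 0" using w_vanishes by (simp add: vanishes_at_def)
  then obtain u where "u \<in> Zp p" "u 1 \<noteq> 0" "A = zp_mul p (p_pow j) u"
    using exact_valuation_factor[OF A_Zp _ A_exact] by blast
  then show ?thesis using unit_has_inverse by blast
qed

lemma A_divides: "c \<in> Zp p \<Longrightarrow> c j = 0 \<Longrightarrow> \<exists>q\<in>Zp p. c = zp_mul p A q"
  using A_unit_factor divisible_by_exact by blast

lemma A_cancel: "q \<in> Zp p \<Longrightarrow> q' \<in> Zp p \<Longrightarrow> zp_mul p A q = zp_mul p A q' \<Longrightarrow> q = q'"
  using A_unit_factor exact_cancel by blast

definition quot_A :: "padic \<Rightarrow> padic" where
  "quot_A c = (SOME q. q \<in> Zp p \<and> c = zp_mul p A q)"

lemma quot_A: assumes "c \<in> Zp p" "c j = 0" shows "quot_A c \<in> Zp p" "c = zp_mul p A (quot_A c)"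
proof -
  have "\<exists>q. q \<in> Zp p \<and> c = zp_mul p A q" using A_divides[OF assms] by blast
  then have "quot_A c \<in> Zp p \<and> c = zp_mul p A (quot_A c)" unfolding quot_A_def by (rule someI_ex)
  then show "quot_A c \<in> Zp p" "c = zp_mul p A (quot_A c)" by auto
qed

definition a0 :: padic where "a0 = quot_A (w n)"
definition a2 :: padic where "a2 = quot_A (w (n+2))"
definition a3 :: padic where "a3 = quot_A (w (n+3))"
definition mu :: "(nat \<Rightarrow> padic) \<Rightarrow> padic" where "mu x = quot_A (BL (vtrunc n w) x)"

lemma a_Zp[simp]: "a0 \<in> Zp p" "a2 \<in> Zp p" "a3 \<in> Zp p"
  unfolding a0_def a2_def a3_def using quot_A(1) w_Zp w_vanishes by (auto simp: vanishes_at_def)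
lemma a_eq: "w n = zp_mul p A a0" "w (n+2) = zp_mul p A a2" "w (n+3) = zp_mul p A a3"
  unfolding a0_def a2_def a3_def using quot_A(2) w_Zp w_vanishes by (auto simp: vanishes_at_def)

lemma mu_Zp[simp]: "x \<in> Zp_vec p n \<Longrightarrow> mu x \<in> Zp p"
  unfolding mu_def using quot_A(1) w_vanishes bil_Zp[OF qfL wL_vec] by (auto simp: vanishes_at_def)
lemma mu_eq: "x \<in> Zp_vec p n \<Longrightarrow> BL (vtrunc n w) x = zp_mul p A (mu x)"
  unfolding mu_def using quot_A(2) w_vanishes bil_Zp[OF qfL wL_vec] by (auto simp: vanishes_at_def)

text \<open>mu is Z_p-linear, since <w_L, .> is and multiplication by A is injective.\<close>
lemma mu_add: assumes a: "a \<in> Zp_vec p n" and b: "b \<in> Zp_vec p n"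
  shows "mu (vadd p a b) = zp_add p (mu a) (mu b)"
proof (rule A_cancel)
  show "mu (vadd p a b) \<in> Zp p" "zp_add p (mu a) (mu b) \<in> Zp p" using a b by simp_all
  have "zp_mul p A (mu (vadd p a b)) = BL (vtrunc n w) (vadd p a b)" using a b by (simp add: mu_eq)
  also have "\<dots> = zp_add p (BL (vtrunc n w) a) (BL (vtrunc n w) b)" by (rule bil_add_right[OF qfL a b wL_vec])
  also have "\<dots> = zp_mul p A (zp_add p (mu a) (mu b))" unfolding mu_eq[OF a] mu_eq[OF b]
    by (simp only: zp_red red_simps) (rule red_eqI, simp add: algebra_simps)
  finally show "zp_mul p A (mu (vadd p a b)) = zp_mul p A (zp_add p (mu a) (mu b))" .
qed

lemma mu_smult: assumes c: "c \<in> Zp p" and a: "a \<in> Zp_vec p n"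
  shows "mu (smult p c a) = zp_mul p c (mu a)"
proof (rule A_cancel)
  show "mu (smult p c a) \<in> Zp p" "zp_mul p c (mu a) \<in> Zp p" using a c by simp_all
  have "zp_mul p A (mu (smult p c a)) = BL (vtrunc n w) (smult p c a)" using a c by (simp add: mu_eq)
  also have "\<dots> = zp_mul p c (BL (vtrunc n w) a)" by (rule bil_smult_right[OF qfL c a wL_vec])
  also have "\<dots> = zp_mul p A (zp_mul p c (mu a))" unfolding mu_eq[OF a]
    by (simp only: zp_red red_simps) (rule red_eqI, simp add: algebra_simps)
  finally show "zp_mul p A (mu (smult p c a)) = zp_mul p A (zp_mul p c (mu a))" .
qed

subsection \<open>The lattice Lambda = L + Z_p t\<close>

text \<open>Q_Lambda(z_L, t) = Q_L(z_L) - t mu(z_L) - (a_0 + a_2 a_3) t^2; coordinate n of z is t.\<close>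
definition disc :: padic where "disc = zp_add p a0 (zp_mul p a3 a2)"
lemma disc_Zp[simp]: "disc \<in> Zp p" by (simp add: disc_def)

definition QLam :: "(nat \<Rightarrow> padic) \<Rightarrow> padic" where
  "QLam z = zp_sub p (zp_sub p (QL (vtrunc n z)) (zp_mul p (z n) (mu (vtrunc n z))))
      (zp_mul p disc (zp_mul p (z n) (z n)))"

lemma QLam_Zp: "z \<in> Zp_vec p (n+1) \<Longrightarrow> QLam z \<in> Zp p"
  unfolding QLam_def using qf_Zp[OF qfL] by (simp add: Zp_vec_Zp)

lemma bil_QLam:
  assumes x: "x \<in> Zp_vec p (n+1)" and z: "z \<in> Zp_vec p (n+1)"
  shows "bil p QLam x z = zp_sub p (zp_sub p (zp_sub p (BL (vtrunc n x) (vtrunc n z))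
     (zp_mul p (x n) (mu (vtrunc n z)))) (zp_mul p (z n) (mu (vtrunc n x))))
     (zp_mul p (zp_add p disc disc) (zp_mul p (x n) (z n)))"
proof -
  have tx: "vtrunc n x \<in> Zp_vec p n" and tz: "vtrunc n z \<in> Zp_vec p n" using x z by simp_all
  show ?thesis
    unfolding bil_def QLam_def vtrunc_vadd mu_add[OF tx tz] vadd_apply
    by (simp only: zp_red red_simps) (rule red_eqI, simp add: algebra_simps)
qed

lemma QLam_qf: "is_quadform p (n+1) QLam"
  unfolding is_quadform_def
proof (intro conjI ballI)
  fix x assume "x \<in> Zp_vec p (n+1)" then show "QLam x \<in> Zp p" by (rule QLam_Zp)
next
  fix a x assume a: "a \<in> Zp p" and x: "x \<in> Zp_vec p (n+1)"
  have tx: "vtrunc n x \<in> Zp_vec p n" using x by simp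
  show "QLam (smult p a x) = zp_mul p (zp_mul p a a) (QLam x)"
    unfolding QLam_def vtrunc_smult qf_smult[OF qfL a tx] mu_smult[OF a tx] smult_apply
    by (simp only: zp_red red_simps) (rule red_eqI, simp add: algebra_simps)
next
  fix x y z assume x: "x \<in> Zp_vec p (n+1)" and y: "y \<in> Zp_vec p (n+1)" and z: "z \<in> Zp_vec p (n+1)"
  have tx: "vtrunc n x \<in> Zp_vec p n" and ty: "vtrunc n y \<in> Zp_vec p n" and tz: "vtrunc n z \<in> Zp_vec p n"
    using x y z by simp_all
  have xy: "vadd p x y \<in> Zp_vec p (n+1)" using x y by simp
  show "bil p QLam (vadd p x y) z = zp_add p (bil p QLam x z) (bil p QLam y z)"
    unfolding bil_QLam[OF xy z] bil_QLam[OF x z] bil_QLam[OF y z] vtrunc_vadd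
      bil_add_left[OF qfL tx ty tz] mu_add[OF tx ty] vadd_apply
    by (simp only: zp_red red_simps) (rule red_eqI, simp add: algebra_simps)
next
  fix a x y assume a: "a \<in> Zp p" and x: "x \<in> Zp_vec p (n+1)" and y: "y \<in> Zp_vec p (n+1)"
  have tx: "vtrunc n x \<in> Zp_vec p n" and ty: "vtrunc n y \<in> Zp_vec p n" using x y by simp_all
  have ax: "smult p a x \<in> Zp_vec p (n+1)" using a x by simp
  show "bil p QLam (smult p a x) y = zp_mul p a (bil p QLam x y)"
    unfolding bil_QLam[OF ax y] bil_QLam[OF x y] vtrunc_smult
      bil_smult_left[OF qfL a tx ty] mu_smult[OF a tx] smult_apply
    by (simp only: zp_red red_simps) (rule red_eqI, simp add: algebra_simps)
qed

subsection \<open>Parametrising the orthogonal complement by H perp Lambda\<close>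

definition ell :: "(nat \<Rightarrow> padic) \<Rightarrow> padic" where
  "ell x = zp_add p (zp_add p (zp_add p (mu (vtrunc n x)) (zp_mul p a0 (x (n+1))))
     (zp_mul p a3 (x (n+2)))) (zp_mul p a2 (x (n+3)))"

lemma B0_w_factor: assumes x: "x \<in> V" shows "B0 w x = zp_mul p A (zp_add p (x n) (ell x))"
proof -
  have tx: "vtrunc n x \<in> Zp_vec p n" using x by simp
  show ?thesis
    unfolding bil_Q0 mu_eq[OF tx] a_eq(1) ell_def
    by (simp only: zp_red red_simps a_eq(2,3)[unfolded zp_red]) (rule red_eqI, simp add: algebra_simps)
qed

lemma orth_x0: assumes x: "x \<in> V" and o: "B0 w x = zp_zero" shows "x n = zp_neg p (ell x)"
proof -
  have xn: "x n \<in> Zp p" and ellZ: "ell x \<in> Zp p"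
    using x Zp_vec_Zp by (auto simp: ell_def)
  have "zp_mul p A (zp_add p (x n) (ell x)) = zp_mul p A 0"
    using o B0_w_factor[OF x] by (simp add: zp_zero_eq)
  then have s: "zp_add p (x n) (ell x) = 0" using A_cancel xn ellZ by simp
  have "x n = red p (zp_add p (x n) (ell x) - ell x)" using xn by (simp add: zp_add_red Zp_red)
  also have "\<dots> = zp_neg p (ell x)" unfolding s by (simp add: zp_neg_red)
  finally show ?thesis .
qed

text \<open>W = H perp Lambda = Z_p^(n+3), with coordinates y_0, y_1 (the plane H), then
  z_L = (y_2, ..., y_(n+1)) and t = y_(n+2).  The embedding phi sets x_L = z_L, x_1 = t,
  x_2 = y_0 + a_2 t, x_3 = y_1 + a_3 t, and x_0 = - ell x as forced by orthogonality;
  psi recovers y from x.\<close>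
abbreviation W :: "(nat \<Rightarrow> padic) set" where "W \<equiv> Zp_vec p (n+3)"

definition yL :: "(nat \<Rightarrow> padic) \<Rightarrow> (nat \<Rightarrow> padic)" where "yL y = vtrunc n (\<lambda>i. y (i+2))"
definition X2 :: "(nat \<Rightarrow> padic) \<Rightarrow> padic" where "X2 y = zp_add p (y 0) (zp_mul p a2 (y (n+2)))"
definition X3 :: "(nat \<Rightarrow> padic) \<Rightarrow> padic" where "X3 y = zp_add p (y 1) (zp_mul p a3 (y (n+2)))"
definition X0 :: "(nat \<Rightarrow> padic) \<Rightarrow> padic" where "X0 y = zp_neg p (zp_add p (zp_add p (zp_add p (mu (yL y)) (zp_mul p a0 (y (n+2))))
   (zp_mul p a3 (X2 y))) (zp_mul p a2 (X3 y)))"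
definition phi :: "(nat \<Rightarrow> padic) \<Rightarrow> (nat \<Rightarrow> padic)" where "phi y = (\<lambda>i. if i < n then y (i+2) else if i = n then X0 y
   else if i = n+1 then y (n+2) else if i = n+2 then X2 y else if i = n+3 then X3 y else 0)"
definition psi :: "(nat \<Rightarrow> padic) \<Rightarrow> (nat \<Rightarrow> padic)" where "psi x = (\<lambda>i. if i = 0 then zp_sub p (x (n+2)) (zp_mul p a2 (x (n+1)))
   else if i = 1 then zp_sub p (x (n+3)) (zp_mul p a3 (x (n+1)))
   else if i < n+2 then x (i-2) else if i = n+2 then x (n+1) else 0)"

lemma yL_vec: "y \<in> W \<Longrightarrow> yL y \<in> Zp_vec p n"
  unfolding yL_def by (rule Zp_vecI) (auto simp: vtrunc_def Zp_vec_Zp zp_zero_eq)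
lemma yL_add: "yL (vadd p a b) = vadd p (yL a) (yL b)"
  unfolding yL_def by (simp add: vtrunc_def vadd_def fun_eq_iff zp_zero_eq)
lemma yL_smult: "yL (smult p c a) = smult p c (yL a)"
  unfolding yL_def by (simp add: vtrunc_def smult_def fun_eq_iff zp_zero_eq)

lemma X_Zp[simp]: "y \<in> W \<Longrightarrow> X2 y \<in> Zp p" "y \<in> W \<Longrightarrow> X3 y \<in> Zp p" "y \<in> W \<Longrightarrow> X0 y \<in> Zp p"
  unfolding X2_def X3_def X0_def using yL_vec by (auto simp: Zp_vec_Zp)

lemma phi_V: "y \<in> W \<Longrightarrow> phi y \<in> V"
  unfolding phi_def by (rule Zp_vecI) (auto simp: Zp_vec_Zp)

lemma phi_trunc: "vtrunc n (phi y) = yL y"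
  by (simp add: phi_def yL_def vtrunc_def fun_eq_iff)

lemma phi_apply: "phi y n = X0 y" "phi y (n+1) = y (n+2)" "phi y (n+2) = X2 y" "phi y (n+3) = X3 y"
  by (simp_all add: phi_def)

lemma phi_add: assumes a: "a \<in> W" and b: "b \<in> W"
  shows "phi (vadd p a b) = vadd p (phi a) (phi b)"
proof (rule ext)
  fix i
  have mu: "mu (yL (vadd p a b)) = zp_add p (mu (yL a)) (mu (yL b))"
    unfolding yL_add by (rule mu_add[OF yL_vec[OF a] yL_vec[OF b]])
  show "phi (vadd p a b) i = vadd p (phi a) (phi b) i"
    unfolding phi_def X0_def X2_def X3_def mu vadd_apply
    by (simp only: zp_red red_simps, (auto)[1]; (rule red_eqI, simp add: algebra_simps))
qed

lemma phi_smult: assumes c: "c \<in> Zp p" and a: "a \<in> W"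
  shows "phi (smult p c a) = smult p c (phi a)"
proof (rule ext)
  fix i
  have mu: "mu (yL (smult p c a)) = zp_mul p c (mu (yL a))"
    unfolding yL_smult by (rule mu_smult[OF c yL_vec[OF a]])
  consider "i < n" | "i = n" | "i = n+1" | "i = n+2" | "i = n+3" | "i \<ge> n + 4" by linarith
  then show "phi (smult p c a) i = smult p c (phi a) i"
  proof cases
    case 1 then show ?thesis by (simp add: phi_def smult_apply)
  next
    case 2 then show ?thesis unfolding 2 smult_apply[of p c "phi a"] phi_apply
      unfolding X0_def X2_def X3_def mu
      unfolding smult_apply
      by (simp only: zp_red red_simps) (rule red_eqI, simp add: algebra_simps)
  next
    case 3 then show ?thesis by (simp add: phi_def smult_apply)
  next
    case 4 then show ?thesis unfolding 4 phi_apply smult_apply X2_def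
      by (simp only: zp_red red_simps) (rule red_eqI, simp add: algebra_simps)
  next
    case 5 then show ?thesis unfolding 5 phi_apply smult_apply X3_def
      by (simp only: zp_red red_simps) (rule red_eqI, simp add: algebra_simps)
  next
    case 6 then show ?thesis by (simp add: phi_def smult_apply)
  qed
qed

lemma psi_W: "x \<in> V \<Longrightarrow> psi x \<in> W"
  unfolding psi_def by (rule Zp_vecI) (auto simp: Zp_vec_Zp)

lemma psi_apply: "psi x 0 = zp_sub p (x (n+2)) (zp_mul p a2 (x (n+1)))"
  "psi x 1 = zp_sub p (x (n+3)) (zp_mul p a3 (x (n+1)))" "psi x (n+2) = x (n+1)"
  by (simp_all add: psi_def)

lemma psi_phi: assumes y: "y \<in> W" shows "psi (phi y) = y"
proof (rule ext)
  fix i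
  have yi: "y i \<in> Zp p" using y Zp_vec_Zp by blast
  consider "i = 0" | "i = 1" | "2 \<le> i" "i < n + 2" | "i = n + 2" | "i > n + 2" by linarith
  then show "psi (phi y) i = y i"
  proof cases
    case 1
    have "zp_sub p (X2 y) (zp_mul p a2 (y (n+2))) = y 0"
    proof (rule red_inj)
      show "zp_sub p (X2 y) (zp_mul p a2 (y (n+2))) \<in> Zp p" "y 0 \<in> Zp p" using y by (simp_all add: Zp_vec_Zp)
      show "red p (zp_sub p (X2 y) (zp_mul p a2 (y (n+2)))) = red p (y 0)"
        by (simp only: X2_def zp_red red_simps) simp
    qed
    then show ?thesis using 1 by (simp add: psi_def phi_def)
  next
    case 2
    have "zp_sub p (X3 y) (zp_mul p a3 (y (n+2))) = y 1"
    proof (rule red_inj)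
      show "zp_sub p (X3 y) (zp_mul p a3 (y (n+2))) \<in> Zp p" "y 1 \<in> Zp p" using y by (simp_all add: Zp_vec_Zp)
      show "red p (zp_sub p (X3 y) (zp_mul p a3 (y (n+2)))) = red p (y 1)"
        by (simp only: X3_def zp_red red_simps) simp
    qed
    then show ?thesis using 2 by (simp add: psi_def phi_def)
  next
    case 3
    then have "Suc (Suc (i-2)) = i" "i - 2 < n" by simp_all
    then show ?thesis using 3 by (simp add: psi_def phi_def)
  next
    case 4 then show ?thesis by (simp add: psi_def phi_def)
  next
    case 5 then show ?thesis using y by (simp add: psi_def Zp_vec_zero)
  qed
qed

lemma phi_orth: assumes y: "y \<in> W" shows "B0 w (phi y) = zp_zero"
proof -
  have "B0 w (phi y) = red p 0"
    unfolding B0_w_factor[OF phi_V[OF y]] ell_def phi_trunc phi_apply X0_def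
    by (simp only: zp_red red_simps) (rule red_eqI, simp add: algebra_simps)
  then show ?thesis by (simp add: zp_zero_eq)
qed

lemma phi_psi: assumes x: "x \<in> V" and o: "B0 w x = zp_zero" shows "phi (psi x) = x"
proof (rule ext)
  fix i
  have xi: "x i \<in> Zp p" for i using x Zp_vec_Zp by blast
  have yL_psi: "yL (psi x) = vtrunc n x" by (simp add: yL_def psi_def vtrunc_def fun_eq_iff)
  have X2_psi: "X2 (psi x) = x (n+2)"
  proof (rule red_inj)
    show "X2 (psi x) \<in> Zp p" "x (n+2) \<in> Zp p" using xi psi_W[OF x] by simp_all
    show "red p (X2 (psi x)) = red p (x (n+2))"
      by (simp only: X2_def psi_apply zp_red red_simps) simp
  qed
  have X3_psi: "X3 (psi x) = x (n+3)"
  proof (rule red_inj)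
    show "X3 (psi x) \<in> Zp p" "x (n+3) \<in> Zp p" using xi psi_W[OF x] by simp_all
    show "red p (X3 (psi x)) = red p (x (n+3))"
      by (simp only: X3_def psi_apply zp_red red_simps) simp
  qed
  have X0_psi: "X0 (psi x) = x n"
    unfolding orth_x0[OF x o] X0_def ell_def yL_psi X2_psi X3_psi psi_apply(3) ..
  consider "i < n" | "i = n" | "i = n+1" | "i = n+2" | "i = n+3" | "i \<ge> n + 4" by linarith
  then show "phi (psi x) i = x i"
  proof cases
    case 1 then show ?thesis by (simp add: phi_def psi_def)
  next
    case 2 then show ?thesis using X0_psi by (simp add: phi_def)
  next
    case 3 then show ?thesis by (simp add: phi_def psi_def)
  next
    case 4 then show ?thesis using X2_psi by (simp add: phi_def)
  next
    case 5 then show ?thesis using X3_psi by (simp add: phi_def)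
  next
    case 6 then show ?thesis using x by (simp add: phi_def Zp_vec_zero)
  qed
qed

lemma phi_Q: assumes y: "y \<in> W" shows "Q0 p n QL (phi y) = hyp_sum p QLam y"
  unfolding Q0_def hyp_sum_def QLam_def phi_trunc phi_apply X0_def X2_def X3_def disc_def
  by (simp only: yL_def[symmetric] zp_red red_simps) (rule red_eqI, simp add: algebra_simps)

theorem pivot_splits_H: "splits_H w"
  unfolding splits_H_def
proof (intro exI conjI)
  show "is_quadform p (n+1) QLam" by (rule QLam_qf)
  have e: "n + 1 + 2 = n + 3" by simp
  show "isometry_onto p (n + 1 + 2) (hyp_sum p QLam) (orth_compl p n QL w) (Q0 p n QL) phi"
    unfolding e isometry_onto_def
  proof (intro conjI ballI)
    fix x y assume "x \<in> W" "y \<in> W" then show "phi (vadd p x y) = vadd p (phi x) (phi y)" by (rule phi_add)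
  next
    fix a x assume "a \<in> Zp p" "x \<in> W" then show "phi (smult p a x) = smult p a (phi x)" by (rule phi_smult)
  next
    show "inj_on phi W" using psi_phi by (metis inj_on_inverseI)
  next
    show "phi ` W = orth_compl p n QL w"
    proof
      show "phi ` W \<subseteq> orth_compl p n QL w" using phi_V phi_orth by (auto simp: orth_compl_def)
      show "orth_compl p n QL w \<subseteq> phi ` W"
      proof
        fix x assume "x \<in> orth_compl p n QL w"
        then have x: "x \<in> V" "B0 w x = zp_zero" by (auto simp: orth_compl_def)
        then have "x = phi (psi x)" using phi_psi by simp
        then show "x \<in> phi ` W" using psi_W[OF x(1)] by blast
      qed
    qed
  next
    fix x assume "x \<in> W" then show "Q0 p n QL (phi x) = hyp_sum p QLam x" by (rule phi_Q)
  qed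
qed

end

section \<open>Reduction of the general case to the pivot case\<close>

context Lambda0
begin

lemma splits_H_via_auto:
  assumes auto: "isometric_auto h g" and w: "w \<in> V"
    and van: "vanishes_at (g w) j" and exact: "g w (n+1) (Suc j) \<noteq> 0"
  shows "splits_H w"
proof -
  have "g w \<in> V" using auto w unfolding isometric_auto_def by blast
  then interpret pivot_vector p n QL "g w" j
    by unfold_locales (use van exact in auto)
  show ?thesis using splits_H_transport[OF auto w pivot_splits_H] .
qed

lemma vanishes_at_0: "w \<in> V \<Longrightarrow> vanishes_at w 0"
  by (simp add: vanishes_at_def Zp_0 Zp_vec_Zp bil_Zp[OF qfL])

text \<open>A non-isotropic vector is not divisible by every power of p: otherwise all
  coordinates and <w_L, w_L> vanish, so 2 Q(w) = <w, w> = 0 and Q(w) = 0.\<close>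
lemma nonisotropic_not_vanishing:
  assumes w: "w \<in> V" and Q: "Q0 p n QL w \<noteq> zp_zero"
  shows "\<exists>m. \<not> vanishes_at w (Suc m)"
proof (rule ccontr)
  assume "\<nexists>m. \<not> vanishes_at w (Suc m)"
  then have van: "\<And>m. vanishes_at w (Suc m)" by blast
  have wZ: "w i \<in> Zp p" for i using w Zp_vec_Zp by blast
  have tw: "vtrunc n w \<in> Zp_vec p n" using w by simp
  have z: "w n = 0" "w (n+1) = 0" "w (n+2) = 0" "w (n+3) = 0"
    using van Zp_eq_0I[OF wZ] unfolding vanishes_at_def by blast+
  have zB: "BL (vtrunc n w) (vtrunc n w) = 0"
    using van Zp_eq_0I[OF bil_Zp[OF qfL tw tw]] tw unfolding vanishes_at_def by blast
  have "B0 w w = 0" unfolding bil_Q0 z zB by (simp add: zp_red)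
  then have "red p (2 * Q0 p n QL w) = 0" unfolding B0_self[OF w] by (simp add: zp_red)
  then have "Q0 p n QL w = 0" using double_eq_0 Q0_Zp[OF w] by blast
  then show False using Q by (simp add: zp_zero_eq)
qed

lemma content_level:
  assumes w: "w \<in> V" and ex: "\<exists>m. \<not> vanishes_at w (Suc m)"
  shows "\<exists>j. vanishes_at w j \<and> \<not> vanishes_at w (Suc j)"
proof -
  define j where "j = (LEAST m. \<not> vanishes_at w (Suc m))"
  have "\<not> vanishes_at w (Suc j)" unfolding j_def using ex by (rule LeastI_ex)
  moreover have "vanishes_at w j"
  proof (cases j)
    case 0 then show ?thesis using vanishes_at_0[OF w] by simp
  next
    case (Suc m)
    then show ?thesis using not_less_Least[of m "\<lambda>m. \<not> vanishes_at w (Suc m)"] unfolding j_def by auto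
  qed
  ultimately show ?thesis by blast
qed

text \<open>If only the L-part of <w, .> is nonzero at level j+1, say <w_L, y> for some y,
  then the Eichler transformation of y makes w a pivot vector: it changes w_1 by
  -<w_L, y> modulo terms vanishing at level j+1, and keeps everything divisible by p^j.\<close>
lemma eichler_makes_pivot:
  assumes w: "w \<in> V" and y: "y \<in> Zp_vec p n" and van: "vanishes_at w j"
    and hit: "BL (vtrunc n w) y (Suc j) \<noteq> 0" and w0: "w n (Suc j) = 0" and w1: "w (n+1) (Suc j) = 0"
  shows "vanishes_at (eichler y w) j" "eichler y w (n+1) (Suc j) \<noteq> 0"
proof -
  have tw: "vtrunc n w \<in> Zp_vec p n" using w by simp
  have wn: "w n \<in> Zp p" using w Zp_vec_Zp by blast
  have lv: "\<And>x. x \<in> Zp_vec p n \<Longrightarrow> BL (vtrunc n w) x j = 0" "w n j = 0" "w (n+1) j = 0"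
    "w (n+2) j = 0" "w (n+3) j = 0"
    using van by (auto simp: vanishes_at_def)
  have new_A: "eichler y w (n+1) = red p (w (n+1) - BL (vtrunc n w) y - QL y * w n)"
    unfolding eichler_apply by (simp only: zp_red red_simps)
  have new_L: "BL (vtrunc n (eichler y w)) x j = 0" if x: "x \<in> Zp_vec p n" for x
  proof -
    have sy: "smult p (w n) y \<in> Zp_vec p n" using wn y by simp
    have "BL (vtrunc n (eichler y w)) x = zp_add p (BL (vtrunc n w) x) (zp_mul p (w n) (BL y x))"
      unfolding eichler_trunc[OF y] bil_add_left[OF qfL tw sy x] bil_smult_left[OF qfL wn y x] ..
    also have "\<dots> = red p (BL (vtrunc n w) x + w n * BL y x)" by (simp only: zp_red red_simps)
    finally show ?thesis unfolding red_apply using lv(1)[OF x] lv(2) by simp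
  qed
  have "eichler y w (n+1) j = 0" unfolding new_A red_apply using lv lv(1)[OF y] by simp
  with new_L lv show "vanishes_at (eichler y w) j"
    unfolding vanishes_at_def eichler_apply(1-3) by blast
  show "eichler y w (n+1) (Suc j) \<noteq> 0"
  proof
    let ?b = "BL (vtrunc n w) y (Suc j)"
    assume "eichler y w (n+1) (Suc j) = 0"
    then have "(- ?b) mod p ^ Suc j = 0" unfolding new_A red_apply using w0 w1 by simp
    then have "p ^ Suc j dvd ?b" by (metis dvd_eq_mod_eq_0 dvd_minus_iff)
    moreover have "0 \<le> ?b" "?b < p ^ Suc j"
      using Zp_range[OF bil_Zp[OF qfL tw y], of "Suc j"] by blast+
    ultimately show False using hit zdvd_not_zless[of ?b "p ^ Suc j"] by linarith
  qed
qed

text \<open>Main reduction: at the content level j some coefficient of <w, .> is nonzero at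
  level j+1; a swap of hyperbolic coordinates or an Eichler transformation moves it
  into the position of w_1.\<close>
theorem nonisotropic_splits_H:
  assumes w: "w \<in> V" and Q: "Q0 p n QL w \<noteq> zp_zero"
  shows "splits_H w"
proof -
  obtain j where van: "vanishes_at w j" and nvan: "\<not> vanishes_at w (Suc j)"
    using content_level[OF w nonisotropic_not_vanishing[OF w Q]] by blast
  have perm_van: "vanishes_at (perm_H \<sigma> w) j" if "\<And>k. k < 4 \<Longrightarrow> \<sigma> k < 4" for \<sigma>
  proof -
    have "w (n + \<sigma> k) j = 0" if "k < 4" for k
      using van \<open>k < 4 \<Longrightarrow> \<sigma> k < 4\<close>[OF that]
      by (auto simp: vanishes_at_def numeral_eq_Suc less_Suc_eq add.commute[of n])
    then show ?thesis using van unfolding vanishes_at_def perm_H_apply by simp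
  qed
  consider "w (n+1) (Suc j) \<noteq> 0" | "w n (Suc j) \<noteq> 0" | "w (n+3) (Suc j) \<noteq> 0"
    | "w (n+2) (Suc j) \<noteq> 0"
    | y where "y \<in> Zp_vec p n" "BL (vtrunc n w) y (Suc j) \<noteq> 0" "w n (Suc j) = 0" "w (n+1) (Suc j) = 0"
    using nvan unfolding vanishes_at_def by blast
  then show ?thesis
  proof cases
    case 1
    have "isometric_auto id id" by (simp add: isometric_auto_def)
    from splits_H_via_auto[OF this w] show ?thesis using van 1 by simp
  next
    case 2 then show ?thesis using splits_H_via_auto[OF swap_in_plane_auto w perm_van]
      unfolding perm_H_apply by (auto simp: swap_in_plane_def)
  next
    case 3 then show ?thesis using splits_H_via_auto[OF swap_planes_auto w perm_van]
      unfolding perm_H_apply by (auto simp: swap_planes_def)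
  next
    case 4 then show ?thesis using splits_H_via_auto[OF swap_across_auto w perm_van]
      unfolding perm_H_apply by (auto simp: swap_across_def)
  next
    case (5 y)
    from eichler_makes_pivot[OF w 5(1) van 5(2-4)] show ?thesis
      by (rule splits_H_via_auto[OF eichler_auto[OF 5(1)] w])
  qed
qed

end

theorem mainTheorem12:
  fixes p :: int and n :: nat and QL :: "(nat \<Rightarrow> padic) \<Rightarrow> padic" and w :: "nat \<Rightarrow> padic"
  assumes "prime p"
    and "is_quadform p n QL"
    and "w \<in> Zp_vec p (n + 4)"
    and "Q0 p n QL w \<noteq> zp_zero"
  shows "\<exists>k QLam \<phi>. is_quadform p k QLam \<and>
           isometry_onto p (k + 2) (hyp_sum p QLam) (orth_compl p n QL w) (Q0 p n QL) \<phi>"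
proof -
  interpret Lambda0 p n QL by unfold_locales (rule assms)+
  show ?thesis using nonisotropic_splits_H[OF assms(3,4)] unfolding splits_H_def .
qed

end
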